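(* Let $T:\mathbb N\to\mathbb N$ satisfy $T(n)\ge n$. If every $f\in\mathbf{FPC}$ satisfies $\mathrm{sz}(f(\tilde v))=O(T(\mathrm{sz}(\tilde v)))$, then $\mathbf{FPC}=\mathbf{FPC}[T]$.
   Context: CorePolyC. Types are $\mathtt{iint},\mathtt{int},\mathtt{bool}$; $\mathsf{Int}=\{\mathtt{iint},\mathtt{int}\}$, ordered by $\mathtt{iint}\preccurlyeq\mathtt{int}$. Values are unbounded integers ($\mathbb Z$) and booleans $\#t,\#f$. Expressions: variables $x$; constants (nonempty decimal digit strings denoting natural numbers; $\mathtt{true}$, $\mathtt{false}$); operator applications $\mathtt{op}(e_1,\dots,e_m)$; parenthesized $(e)$. Operators and semantics: unary $-$ (negation); binary $+,-,/,\%$ (integer addition, subtraction, division, remainder, with division and remainder by $0$ returning $0$); $\mathtt{size}$, with $\mathtt{size}(v)=\lceil\log_2(\mathrm{abs}(v)+1)\rceil$; comparisons $\texttt{>=},\texttt{<=},\texttt{>},\texttt{<},\texttt{==},\texttt{!=}$ on integers returning booleans; boolean $\texttt{!},\texttt{\&\&},\texttt{||}$. Statements: declaration $t\ x;$; assignment $x=e;$; block $\{s_1\dots s_m\}$; conditional $\mathbf{if}(e)\ s_1\ \mathbf{else}\ s_2$; loop $\mathbf{for}(x<\mathtt{size}(e))\ s$ (loop bounds are always syntactically of the form $\mathtt{size}(e)$). A program is $\mathbf{int\ main}(\mathbf{int}\ x_1,\dots,\mathbf{int}\ x_m)\{s_1\dots s_k\ \mathbf{return}\ e;\}$. Semantics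 (big-step). A store $\Sigma$ is a finite partial map from variables to values; $\Sigma[x\mapsto v]$ is the update. $\Sigma\vdash e\Downarrow v$: a variable $x\in\mathrm{dom}\,\Sigma$ evaluates to $\Sigma(x)$, constants to their value, $\mathtt{op}(e_1,\dots,e_m)$ to $\mathtt{op}$ applied to the values of the $e_i$. $\Sigma\vdash s\Downarrow\Sigma'$: $t\ x;$ gives $\Sigma[x\mapsto 0]$ if $t\in\mathsf{Int}$ and $\Sigma[x\mapsto\#f]$ if $t=\mathtt{bool}$; $x=e;$ (with $x\in\mathrm{dom}\,\Sigma$) gives $\Sigma[x\mapsto v]$ where $\Sigma\vdash e\Downarrow v$; a sequence or block executes its statements in order threading the store (a block returns the final store); a conditional evaluates its guard to a boolean and executes the corresponding branch; $\mathbf{for}(x<e)\ s$ evaluates $e$ once to an integer $i$, sets $\Sigma_0=\Sigma$, executes $s$ from $\Sigma_j[x\mapsto j]$ obtaining $\Sigma_{j+1}$ for $j=0,\dots,i-1$, and ends in $\Sigma_i$ (i.e. in $\Sigma$ if $i\le 0$). A program on inputs $v_1,\dots,v_m$ runs its statements from the store $[x_1\mapsto v_1,\dots,x_m\mapsto v_m]$ and outputs the value of its return expression in the resulting store. Type system. A typing environment $\Gamma$ is a finite partial map from variables to types; $\ell\in\{\#t,\#f\}$ is the loop indicator. Expression typing $\Gamma,\ell\vdash e:t$: a variable $x\in\mathrm{dom}\,\Gamma$ has type $\Gamma(x)$; digit literals have type $\mathtt{iint}$, $\mathtt{true},\mathtt{false}$ have type $\mathtt{bool}$; $\texttt{!},\texttt{\&\&},\texttt{||}$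 take $\mathtt{bool}$ arguments to $\mathtt{bool}$; comparisons take arguments with types in $\mathsf{Int}$ to $\mathtt{bool}$; $+,-,/,\%$ take arguments with types in $\mathsf{Int}$ to their supremum under $\preccurlyeq$ ($\mathtt{iint}$ iff all arguments are $\mathtt{iint}$); $\mathtt{size}$ takes only an $\mathtt{iint}$ argument, giving $\mathtt{iint}$; parentheses preserve types. Statement typing $\Gamma,\ell\vdash s:\Gamma'$: $t\ x;$ is typable iff $x\notin\mathrm{dom}\,\Gamma$ and not($\ell=\#t$ and $t=\mathtt{iint}$), giving $\Gamma[x\mapsto t]$; $x=e;$ is typable iff $x\in\mathrm{dom}\,\Gamma$, not($\ell=\#t$ and $\Gamma(x)=\mathtt{iint}$), and $\Gamma,\ell\vdash e:t$ with $t,\Gamma(x)$ both in $\mathsf{Int}$ or both $\mathtt{bool}$, giving $\Gamma$; a sequence $s_1\dots s_m$ threads $\Gamma_0=\Gamma$, $\Gamma_{i-1},\ell\vdash s_i:\Gamma_i$, giving $\Gamma_m$; a block $\{\tilde s\}$ is typable if its sequence is, giving $\Gamma$; a conditional needs a guard of type $\mathtt{bool}$ and both branches typable under $\Gamma,\ell$, giving $\Gamma$; $\mathbf{for}(x<e)\ s$ needs $\Gamma,\ell\vdash e:\mathtt{iint}$, $x\notin\mathrm{dom}\,\Gamma$, and $\Gamma[x\mapsto\mathtt{iint}],\#t\vdash s:\Gamma'$ for some $\Gamma'$, giving $\Gamma$. A program is well-typed if its statements are typable starting from $[x_1\mapsto\mathtt{int},\dots,x_m\mapsto\mathtt{int}]$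 with $\ell=\#f$, ending in some $\Gamma'$, and its return expression has a type in $\mathsf{Int}$ under $\Gamma',\#f$. A well-typed program $p$ with $m$ inputs computes a total function $[\![p]\!]:\mathbb Z^m\to\mathbb Z$; $\mathbf{FPC}$ is the set of all such functions. Sizes: $\mathrm{sz}(v)=\lceil\log_2(\mathrm{abs}(v)+1)\rceil$ for $v\in\mathbb Z$, $\mathrm{sz}(\#t)=\mathrm{sz}(\#f)=1$, $\mathrm{sz}(v_1,\dots,v_m)=\sum_i\mathrm{sz}(v_i)$. Instruction count (cost semantics) $\mathrm{ic}$: a variable or constant costs $1$; a parenthesized expression costs $1$ plus its content; $\mathtt{op}(e_1,\dots,e_m)$ costs $1$ plus the costs of the $e_i$; a declaration costs $1$; an assignment costs $1$ plus the cost of its expression; a block costs $1$ plus the cost of its sequence; a sequence costs the sum of its statements' costs; a conditional costs the guard's cost plus the cost of the executed branch; a loop costs the cost of evaluating its bound plus the sum of the costs of all executed iterations of its body; a program costs its statements' cost plus the cost of its return expression. $\mathrm{ic}(p,\tilde v)$ is the cost of running $p$ on $\tilde v$. $\mathbf{FPC}[T]$ is the set of $f\in\mathbf{FPC}$ computed by some well-typed program $p$ with $\mathrm{ic}(p,\tilde v)=O(T(\mathrm{sz}(\tilde v)))$. *)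

theory Defs
  imports Complex_Main
begin

type_synonym vname = string

datatype ty = TIInt | TInt | TBool

datatype val = VI int | VB bool

datatype oper =
    ONeg | OPlus | OMinus | ODiv | OMod | OSize
  | OGe | OLe | OGt | OLt | OEq | ONe
  | ONot | OAnd | OOr

datatype expr =
    Var vname
  | Num nat              \<comment> \<open>nonempty decimal digit string, identified with the natural number it denotes\<close>
  | Tru
  | Fls
  | Op oper "expr list"
  | Paren expr

datatype stmt =
    Decl ty vname
  | Assign vname expr
  | Block "stmt list"
  | If expr stmt stmt
  | For vname expr stmt  \<comment> \<open>For x e s  stands for  for(x < size(e)) s\<close>

record prog =
  params :: "vname list"
  body   :: "stmt list"
  ret    :: expr

definition sz_int :: "int \<Rightarrow> nat" where
  "sz_int v = nat \<lceil>log 2 (real_of_int (\<bar>v\<bar> + 1))\<rceil>"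

fun sz_val :: "val \<Rightarrow> nat" where
  "sz_val (VI v) = sz_int v"
| "sz_val (VB b) = 1"

definition sz_ints :: "int list \<Rightarrow> nat" where
  "sz_ints vs = sum_list (map sz_int vs)"

(* integer division: C-style truncation toward zero; division/remainder by 0 give 0 *)
definition cdiv :: "int \<Rightarrow> int \<Rightarrow> int" where
  "cdiv a b = (if b = 0 then 0 else sgn a * sgn b * (\<bar>a\<bar> div \<bar>b\<bar>))"

definition cmod :: "int \<Rightarrow> int \<Rightarrow> int" where
  "cmod a b = (if b = 0 then 0 else a - b * cdiv a b)"

fun as_int :: "val \<Rightarrow> int option" where
  "as_int (VI a) = Some a" | "as_int (VB b) = None"

fun as_bool :: "val \<Rightarrow> bool option" where
  "as_bool (VB b) = Some b" | "as_bool (VI a) = None"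

definition un :: "('a \<Rightarrow> 'b) \<Rightarrow> ('c \<Rightarrow> 'a option) \<Rightarrow> 'c list \<Rightarrow> 'b option" where
  "un g p xs = (if length xs = 1 then map_option g (p (xs ! 0)) else None)"

definition bin :: "('a \<Rightarrow> 'a \<Rightarrow> 'b) \<Rightarrow> ('c \<Rightarrow> 'a option) \<Rightarrow> 'c list \<Rightarrow> 'b option" where
  "bin g p xs = (if length xs = 2 then
      (case (p (xs ! 0), p (xs ! 1)) of (Some a, Some b) \<Rightarrow> Some (g a b) | _ \<Rightarrow> None) else None)"

fun op_sem :: "oper \<Rightarrow> val list \<Rightarrow> val option" where
  "op_sem ONeg vs = un (\<lambda>a. VI (- a)) as_int vs"
| "op_sem OPlus vs = bin (\<lambda>a b. VI (a + b)) as_int vs"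
| "op_sem OMinus vs = bin (\<lambda>a b. VI (a - b)) as_int vs"
| "op_sem ODiv vs = bin (\<lambda>a b. VI (cdiv a b)) as_int vs"
| "op_sem OMod vs = bin (\<lambda>a b. VI (cmod a b)) as_int vs"
| "op_sem OSize vs = un (\<lambda>a. VI (int (sz_int a))) as_int vs"
| "op_sem OGe vs = bin (\<lambda>a b. VB (a \<ge> b)) as_int vs"
| "op_sem OLe vs = bin (\<lambda>a b. VB (a \<le> b)) as_int vs"
| "op_sem OGt vs = bin (\<lambda>a b. VB (a > b)) as_int vs"
| "op_sem OLt vs = bin (\<lambda>a b. VB (a < b)) as_int vs"
| "op_sem OEq vs = bin (\<lambda>a b. VB (a = b)) as_int vs"
| "op_sem ONe vs = bin (\<lambda>a b. VB (a \<noteq> b)) as_int vs"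
| "op_sem ONot vs = un (\<lambda>a. VB (\<not> a)) as_bool vs"
| "op_sem OAnd vs = bin (\<lambda>a b. VB (a \<and> b)) as_bool vs"
| "op_sem OOr vs = bin (\<lambda>a b. VB (a \<or> b)) as_bool vs"

type_synonym store = "vname \<Rightarrow> val option"

fun default_val :: "ty \<Rightarrow> val" where
  "default_val TBool = VB False"
| "default_val _ = VI 0"

(* evalE \<Sigma> e v c :  \<Sigma> \<turnstile> e \<Down> v  with instruction count c *)
inductive evalE :: "store \<Rightarrow> expr \<Rightarrow> val \<Rightarrow> nat \<Rightarrow> bool"
  and evalEs :: "store \<Rightarrow> expr list \<Rightarrow> val list \<Rightarrow> nat \<Rightarrow> bool" where
  EVar: "\<Sigma> x = Some v \<Longrightarrow> evalE \<Sigma> (Var x) v 1"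
| ENum: "evalE \<Sigma> (Num n) (VI (int n)) 1"
| ETru: "evalE \<Sigma> Tru (VB True) 1"
| EFls: "evalE \<Sigma> Fls (VB False) 1"
| EParen: "evalE \<Sigma> e v c \<Longrightarrow> evalE \<Sigma> (Paren e) v (c + 1)"
| EOp: "evalEs \<Sigma> es vs c \<Longrightarrow> op_sem f vs = Some v \<Longrightarrow> evalE \<Sigma> (Op f es) v (c + 1)"
| ENil: "evalEs \<Sigma> [] [] 0"
| ECons: "evalE \<Sigma> e v c \<Longrightarrow> evalEs \<Sigma> es vs cs \<Longrightarrow> evalEs \<Sigma> (e # es) (v # vs) (c + cs)"

(* exec \<Sigma> s \<Sigma>' c :  \<Sigma> \<turnstile> s \<Down> \<Sigma>'  with instruction count c;
   execLoop x s j i \<Sigma> \<Sigma>' c : iterations j, j+1, ..., i-1 of the loop body s *)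
inductive exec :: "store \<Rightarrow> stmt \<Rightarrow> store \<Rightarrow> nat \<Rightarrow> bool"
  and execSeq :: "store \<Rightarrow> stmt list \<Rightarrow> store \<Rightarrow> nat \<Rightarrow> bool"
  and execLoop :: "vname \<Rightarrow> stmt \<Rightarrow> nat \<Rightarrow> int \<Rightarrow> store \<Rightarrow> store \<Rightarrow> nat \<Rightarrow> bool" where
  XDecl: "exec \<Sigma> (Decl t x) (\<Sigma>(x \<mapsto> default_val t)) 1"
| XAssign: "x \<in> dom \<Sigma> \<Longrightarrow> evalE \<Sigma> e v c \<Longrightarrow> exec \<Sigma> (Assign x e) (\<Sigma>(x \<mapsto> v)) (c + 1)"
| XBlock: "execSeq \<Sigma> ss \<Sigma>' c \<Longrightarrow> exec \<Sigma> (Block ss) \<Sigma>' (c + 1)"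
| XIfT: "evalE \<Sigma> e (VB True) c \<Longrightarrow> exec \<Sigma> s1 \<Sigma>' c' \<Longrightarrow> exec \<Sigma> (If e s1 s2) \<Sigma>' (c + c')"
| XIfF: "evalE \<Sigma> e (VB False) c \<Longrightarrow> exec \<Sigma> s2 \<Sigma>' c' \<Longrightarrow> exec \<Sigma> (If e s1 s2) \<Sigma>' (c + c')"
| XFor: "evalE \<Sigma> (Op OSize [e]) (VI i) c \<Longrightarrow> execLoop x s 0 i \<Sigma> \<Sigma>' c'
          \<Longrightarrow> exec \<Sigma> (For x e s) \<Sigma>' (c + c')"
| XSNil: "execSeq \<Sigma> [] \<Sigma> 0"
| XSCons: "exec \<Sigma> s \<Sigma>1 c \<Longrightarrow> execSeq \<Sigma>1 ss \<Sigma>' cs \<Longrightarrow> execSeq \<Sigma> (s # ss) \<Sigma>' (c + cs)"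
| XLStop: "\<not> (int j < i) \<Longrightarrow> execLoop x s j i \<Sigma> \<Sigma> 0"
| XLStep: "int j < i \<Longrightarrow> exec (\<Sigma>(x \<mapsto> VI (int j))) s \<Sigma>1 c1 \<Longrightarrow> execLoop x s (Suc j) i \<Sigma>1 \<Sigma>' c2
           \<Longrightarrow> execLoop x s j i \<Sigma> \<Sigma>' (c1 + c2)"

(* run p vs r c : program p on inputs vs outputs r with instruction count c = ic(p, vs) *)
definition run :: "prog \<Rightarrow> int list \<Rightarrow> int \<Rightarrow> nat \<Rightarrow> bool" where
  "run p vs r c \<longleftrightarrow> (\<exists>\<Sigma>' c1 c2. execSeq (Map.empty(params p [\<mapsto>] map VI vs)) (body p) \<Sigma>' c1
                        \<and> evalE \<Sigma>' (ret p) (VI r) c2 \<and> c = c1 + c2)"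

type_synonym tenv = "vname \<Rightarrow> ty option"

definition is_int_ty :: "ty \<Rightarrow> bool" where
  "is_int_ty t \<longleftrightarrow> t = TIInt \<or> t = TInt"

definition sup_ty :: "ty \<Rightarrow> ty \<Rightarrow> ty" where
  "sup_ty t1 t2 = (if t1 = TIInt \<and> t2 = TIInt then TIInt else TInt)"

definition int_ty :: "ty \<Rightarrow> ty option" where
  "int_ty t = (if is_int_ty t then Some t else None)"

definition iint_ty :: "ty \<Rightarrow> unit option" where
  "iint_ty t = (if t = TIInt then Some () else None)"

definition bool_ty :: "ty \<Rightarrow> unit option" where
  "bool_ty t = (if t = TBool then Some () else None)"

fun op_ty :: "oper \<Rightarrow> ty list \<Rightarrow> ty option" where
  "op_ty ONeg ts = un id int_ty ts"
| "op_ty OPlus ts = bin sup_ty int_ty ts"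
| "op_ty OMinus ts = bin sup_ty int_ty ts"
| "op_ty ODiv ts = bin sup_ty int_ty ts"
| "op_ty OMod ts = bin sup_ty int_ty ts"
| "op_ty OSize ts = un (\<lambda>_. TIInt) iint_ty ts"
| "op_ty OGe ts = bin (\<lambda>_ _. TBool) int_ty ts"
| "op_ty OLe ts = bin (\<lambda>_ _. TBool) int_ty ts"
| "op_ty OGt ts = bin (\<lambda>_ _. TBool) int_ty ts"
| "op_ty OLt ts = bin (\<lambda>_ _. TBool) int_ty ts"
| "op_ty OEq ts = bin (\<lambda>_ _. TBool) int_ty ts"
| "op_ty ONe ts = bin (\<lambda>_ _. TBool) int_ty ts"
| "op_ty ONot ts = un (\<lambda>_. TBool) bool_ty ts"
| "op_ty OAnd ts = bin (\<lambda>_ _. TBool) bool_ty ts"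
| "op_ty OOr ts = bin (\<lambda>_ _. TBool) bool_ty ts"

(* expression typing  Gamma, l |- e : t  (the loop indicator plays no role for expressions) *)
inductive tyE :: "tenv \<Rightarrow> expr \<Rightarrow> ty \<Rightarrow> bool"
  and tyEs :: "tenv \<Rightarrow> expr list \<Rightarrow> ty list \<Rightarrow> bool" where
  TVar: "\<Gamma> x = Some t \<Longrightarrow> tyE \<Gamma> (Var x) t"
| TNum: "tyE \<Gamma> (Num n) TIInt"
| TTru: "tyE \<Gamma> Tru TBool"
| TFls: "tyE \<Gamma> Fls TBool"
| TParen: "tyE \<Gamma> e t \<Longrightarrow> tyE \<Gamma> (Paren e) t"
| TOp: "tyEs \<Gamma> es ts \<Longrightarrow> op_ty f ts = Some t \<Longrightarrow> tyE \<Gamma> (Op f es) t"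
| TNil: "tyEs \<Gamma> [] []"
| TCons: "tyE \<Gamma> e t \<Longrightarrow> tyEs \<Gamma> es ts \<Longrightarrow> tyEs \<Gamma> (e # es) (t # ts)"

definition compat_ty :: "ty \<Rightarrow> ty \<Rightarrow> bool" where
  "compat_ty t1 t2 \<longleftrightarrow> (is_int_ty t1 \<and> is_int_ty t2) \<or> (t1 = TBool \<and> t2 = TBool)"

(* statement typing  \<Gamma>, lp \<turnstile> s : \<Gamma>' *)
inductive tyS :: "tenv \<Rightarrow> bool \<Rightarrow> stmt \<Rightarrow> tenv \<Rightarrow> bool"
  and tySeq :: "tenv \<Rightarrow> bool \<Rightarrow> stmt list \<Rightarrow> tenv \<Rightarrow> bool" where
  TDecl: "x \<notin> dom \<Gamma> \<Longrightarrow> \<not> (lp \<and> t = TIInt) \<Longrightarrow> tyS \<Gamma> lp (Decl t x) (\<Gamma>(x \<mapsto> t))"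
| TAssign: "\<Gamma> x = Some tx \<Longrightarrow> \<not> (lp \<and> tx = TIInt) \<Longrightarrow> tyE \<Gamma> e t \<Longrightarrow> compat_ty t tx
            \<Longrightarrow> tyS \<Gamma> lp (Assign x e) \<Gamma>"
| TBlock: "tySeq \<Gamma> lp ss \<Gamma>' \<Longrightarrow> tyS \<Gamma> lp (Block ss) \<Gamma>"
| TIf: "tyE \<Gamma> e TBool \<Longrightarrow> tyS \<Gamma> lp s1 \<Gamma>1 \<Longrightarrow> tyS \<Gamma> lp s2 \<Gamma>2 \<Longrightarrow> tyS \<Gamma> lp (If e s1 s2) \<Gamma>"
| TFor: "tyE \<Gamma> (Op OSize [e]) TIInt \<Longrightarrow> x \<notin> dom \<Gamma> \<Longrightarrow> tyS (\<Gamma>(x \<mapsto> TIInt)) True s \<Gamma>'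
         \<Longrightarrow> tyS \<Gamma> lp (For x e s) \<Gamma>"
| TSNil: "tySeq \<Gamma> lp [] \<Gamma>"
| TSCons: "tyS \<Gamma> lp s \<Gamma>1 \<Longrightarrow> tySeq \<Gamma>1 lp ss \<Gamma>' \<Longrightarrow> tySeq \<Gamma> lp (s # ss) \<Gamma>'"

definition well_typed :: "prog \<Rightarrow> bool" where
  "well_typed p \<longleftrightarrow> (\<exists>\<Gamma>' t. tySeq (Map.empty(params p [\<mapsto>] replicate (length (params p)) TInt)) False (body p) \<Gamma>'
                        \<and> tyE \<Gamma>' (ret p) t \<and> is_int_ty t)"

(* p computes the m-ary function f : \<int>^m \<rightarrow> \<int> (represented on lists of length m) *)
definition computes :: "prog \<Rightarrow> (int list \<Rightarrow> int) \<Rightarrow> bool" where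
  "computes p f \<longleftrightarrow> (\<forall>vs. length vs = length (params p) \<longrightarrow> (\<exists>c. run p vs (f vs) c))"

(* FPC as a set of pairs (arity m, function on lists of length m) *)
definition FPC :: "(nat \<times> (int list \<Rightarrow> int)) set" where
  "FPC = {(m, f). \<exists>p. well_typed p \<and> length (params p) = m \<and> computes p f}"

definition FPC_T :: "(nat \<Rightarrow> nat) \<Rightarrow> (nat \<times> (int list \<Rightarrow> int)) set" where
  "FPC_T T = {(m, f). \<exists>p. well_typed p \<and> length (params p) = m \<and> computes p f
      \<and> (\<exists>C N. \<forall>vs c. length vs = m \<longrightarrow> sz_ints vs \<ge> N \<longrightarrow> run p vs (f vs) c
                       \<longrightarrow> c \<le> C * T (sz_ints vs))}"

end

theory Submission
  imports Defs
begin

(* Instrument a program p with a fresh variable r that starts at 1, is doubled after every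
   statement of every sequence, after every branch of a conditional and after every loop
   iteration, and is finally returned.  The instrumented program is well typed and outputs 2^n,
   where n is the number of doublings.  Between two doublings p executes at most K instructions,
   K the syntactic size of its body, so its cost is at most K * n + O(1) <= K * sz(2^n) + O(1).
   The hypothesis applied to the instrumented function bounds sz(2^n) by O(T), and T(n) >= n >= 1
   absorbs the additive constant. *)

inductive_cases evalE_VarE: "evalE \<Sigma> (Var x) v c"
inductive_cases evalE_NumE: "evalE \<Sigma> (Num n) v c"
inductive_cases evalE_TruE: "evalE \<Sigma> Tru v c"
inductive_cases evalE_FlsE: "evalE \<Sigma> Fls v c"
inductive_cases evalE_ParenE: "evalE \<Sigma> (Paren e) v c"
inductive_cases evalE_OpE: "evalE \<Sigma> (Op f es) v c"
inductive_cases evalEs_NilE: "evalEs \<Sigma> [] vs c"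
inductive_cases evalEs_ConsE: "evalEs \<Sigma> (e # es) vs c"

lemma evalE_deterministic:
  "evalE \<Sigma> e v c \<Longrightarrow> evalE \<Sigma> e v' c' \<Longrightarrow> v' = v"
  "evalEs \<Sigma> es vs c \<Longrightarrow> evalEs \<Sigma> es vs' c' \<Longrightarrow> vs' = vs"
proof (induction arbitrary: v' c' and vs' c' rule: evalE_evalEs.inducts)
  case EVar then show ?case by (auto elim: evalE_VarE)
next
  case ENum then show ?case by (auto elim: evalE_NumE)
next
  case ETru then show ?case by (auto elim: evalE_TruE)
next
  case EFls then show ?case by (auto elim: evalE_FlsE)
next
  case EParen then show ?case by (blast elim: evalE_ParenE)
next
  case (EOp \<Sigma> es vs c f v)
  from EOp.prems obtain vs' c' where "evalEs \<Sigma> es vs' c'" "op_sem f vs' = Some v'"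
    by (rule evalE_OpE) blast
  with EOp.IH EOp.hyps(2) show ?case by simp
next
  case ENil then show ?case by (auto elim: evalEs_NilE)
next
  case ECons then show ?case by (blast elim: evalEs_ConsE)
qed

inductive_cases exec_DeclE: "exec \<Sigma> (Decl t x) \<Sigma>' c"
inductive_cases exec_AssignE: "exec \<Sigma> (Assign x e) \<Sigma>' c"
inductive_cases exec_BlockE: "exec \<Sigma> (Block ss) \<Sigma>' c"
inductive_cases exec_IfE: "exec \<Sigma> (If e s1 s2) \<Sigma>' c"
inductive_cases exec_ForE: "exec \<Sigma> (For x e s) \<Sigma>' c"
inductive_cases execSeq_NilE: "execSeq \<Sigma> [] \<Sigma>' c"
inductive_cases execSeq_ConsE: "execSeq \<Sigma> (s # ss) \<Sigma>' c"
inductive_cases execLoopE: "execLoop x s j i \<Sigma> \<Sigma>' c"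

lemma exec_deterministic:
  "exec \<Sigma> s \<Sigma>' c \<Longrightarrow> exec \<Sigma> s \<Sigma>'' c' \<Longrightarrow> \<Sigma>'' = \<Sigma>'"
  "execSeq \<Sigma> ss \<Sigma>' c \<Longrightarrow> execSeq \<Sigma> ss \<Sigma>'' c' \<Longrightarrow> \<Sigma>'' = \<Sigma>'"
  "execLoop x s j i \<Sigma> \<Sigma>' c \<Longrightarrow> execLoop x s j i \<Sigma> \<Sigma>'' c' \<Longrightarrow> \<Sigma>'' = \<Sigma>'"
proof (induction arbitrary: \<Sigma>'' c' and \<Sigma>'' c' and \<Sigma>'' c' rule: exec_execSeq_execLoop.inducts)
  case XDecl then show ?case by (auto elim: exec_DeclE)
next
  case (XAssign x \<Sigma> e v c)
  from XAssign.prems obtain v' c' where "\<Sigma>'' = \<Sigma>(x \<mapsto> v')" "evalE \<Sigma> e v' c'"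
    by (rule exec_AssignE) blast
  with evalE_deterministic(1)[OF XAssign.hyps(2)] show ?case by simp
next
  case XBlock then show ?case by (blast elim: exec_BlockE)
next
  case (XIfT \<Sigma> e c s1 \<Sigma>' c' s2)
  from XIfT.prems show ?case
  proof (rule exec_IfE)
    fix c2 c3 assume "evalE \<Sigma> e (VB False) c2"
    from evalE_deterministic(1)[OF XIfT.hyps(1) this] show ?case by simp
  qed (use XIfT.IH in blast)
next
  case (XIfF \<Sigma> e c s2 \<Sigma>' c' s1)
  from XIfF.prems show ?case
  proof (rule exec_IfE)
    fix c2 c3 assume "evalE \<Sigma> e (VB True) c2"
    from evalE_deterministic(1)[OF XIfF.hyps(1) this] show ?case by simp
  qed (use XIfF.IH in blast)
next
  case (XFor \<Sigma> e i c x s \<Sigma>' c')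
  from XFor.prems obtain i' c2 c3
    where "evalE \<Sigma> (Op OSize [e]) (VI i') c2" "execLoop x s 0 i' \<Sigma> \<Sigma>'' c3"
    by (rule exec_ForE) blast
  moreover from evalE_deterministic(1)[OF XFor.hyps(1) this(1)] have "i' = i" by simp
  ultimately show ?case using XFor.IH by simp
next
  case XSNil then show ?case by (auto elim: execSeq_NilE)
next
  case XSCons then show ?case by (blast elim: execSeq_ConsE)
next
  case XLStop then show ?case by (auto elim: execLoopE)
next
  case XLStep then show ?case by (blast elim: execLoopE)
qed

lemma run_deterministic: "run p vs y c \<Longrightarrow> run p vs y' c' \<Longrightarrow> y' = y"
  unfolding run_def by (metis exec_deterministic(2) evalE_deterministic(1) val.inject(1))

primrec expr_size :: "expr \<Rightarrow> nat" where
  "expr_size (Var x) = 1"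
| "expr_size (Num n) = 1"
| "expr_size Tru = 1"
| "expr_size Fls = 1"
| "expr_size (Paren e) = expr_size e + 1"
| "expr_size (Op f es) = sum_list (map expr_size es) + 1"

primrec stmt_size :: "stmt \<Rightarrow> nat" where
  "stmt_size (Decl t x) = 1"
| "stmt_size (Assign x e) = expr_size e + 1"
| "stmt_size (Block ss) = sum_list (map stmt_size ss) + 1"
| "stmt_size (If e s1 s2) = expr_size e + stmt_size s1 + stmt_size s2"
| "stmt_size (For x e s) = expr_size (Op OSize [e]) + stmt_size s"

lemma stmt_size_le_sum_list: "s \<in> set ss \<Longrightarrow> stmt_size s \<le> sum_list (map stmt_size ss)"
  by (simp add: member_le_sum_list)

lemma evalE_cost_eq_size:
  "evalE \<Sigma> e v c \<Longrightarrow> c = expr_size e"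
  "evalEs \<Sigma> es vs c \<Longrightarrow> c = sum_list (map expr_size es)"
  by (induction rule: evalE_evalEs.inducts) auto

primrec declared_vars :: "stmt \<Rightarrow> vname set" where
  "declared_vars (Decl t x) = {x}"
| "declared_vars (Assign x e) = {}"
| "declared_vars (Block ss) = \<Union> (set (map declared_vars ss))"
| "declared_vars (If e s1 s2) = declared_vars s1 \<union> declared_vars s2"
| "declared_vars (For x e s) = insert x (declared_vars s)"

lemma finite_declared_vars: "finite (declared_vars s)"
  by (induction s) auto

lemma exec_dom_subset:
  "exec \<Sigma> s \<Sigma>' c \<Longrightarrow> dom \<Sigma>' \<subseteq> dom \<Sigma> \<union> declared_vars s"
  "execSeq \<Sigma> ss \<Sigma>' c \<Longrightarrow> dom \<Sigma>' \<subseteq> dom \<Sigma> \<union> \<Union> (declared_vars ` set ss)"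
  "execLoop x s j i \<Sigma> \<Sigma>' c \<Longrightarrow> dom \<Sigma>' \<subseteq> dom \<Sigma> \<union> insert x (declared_vars s)"
proof (induction rule: exec_execSeq_execLoop.inducts)
  case XAssign then show ?case by (simp add: insert_absorb del: fun_upd_apply)
next
  case (XSCons \<Sigma> s \<Sigma>1 c ss \<Sigma>' cs)
  have "dom \<Sigma>' \<subseteq> dom \<Sigma>1 \<union> \<Union> (declared_vars ` set ss)" by (fact XSCons.IH(2))
  also have "\<dots> \<subseteq> dom \<Sigma> \<union> declared_vars s \<union> \<Union> (declared_vars ` set ss)"
    using XSCons.IH(1) by (rule Un_mono) (rule order_refl)
  finally show ?case by (simp add: Un_assoc)
next
  case XLStep then show ?case by (simp del: fun_upd_apply) blast
qed auto

lemma tyS_dom_subset: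
  "tyS \<Gamma> lp s \<Gamma>' \<Longrightarrow> dom \<Gamma>' \<subseteq> dom \<Gamma> \<union> declared_vars s"
  "tySeq \<Gamma> lp ss \<Gamma>' \<Longrightarrow> dom \<Gamma>' \<subseteq> dom \<Gamma> \<union> \<Union> (declared_vars ` set ss)"
proof (induction rule: tyS_tySeq.inducts)
  case (TSCons \<Gamma> lp s \<Gamma>1 ss \<Gamma>')
  have "dom \<Gamma>' \<subseteq> dom \<Gamma>1 \<union> \<Union> (declared_vars ` set ss)" by (fact TSCons.IH(2))
  also have "\<dots> \<subseteq> dom \<Gamma> \<union> declared_vars s \<union> \<Union> (declared_vars ` set ss)"
    using TSCons.IH(1) by (rule Un_mono) (rule order_refl)
  finally show ?case by (simp add: Un_assoc)
qed auto

lemma map_le_upd_fresh: "r \<notin> dom m \<Longrightarrow> m \<subseteq>\<^sub>m m(r \<mapsto> v)"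
  by (auto simp: map_le_def)

lemma evalE_map_le:
  "evalE \<Sigma> e v c \<Longrightarrow> \<Sigma> \<subseteq>\<^sub>m \<Sigma>' \<Longrightarrow> evalE \<Sigma>' e v c"
  "evalEs \<Sigma> es vs c \<Longrightarrow> \<Sigma> \<subseteq>\<^sub>m \<Sigma>' \<Longrightarrow> evalEs \<Sigma>' es vs c"
proof (induction rule: evalE_evalEs.inducts)
  case (EVar \<Sigma> x v)
  then show ?case by (metis domI evalE_evalEs.EVar map_le_def)
qed (auto intro: evalE_evalEs.intros[simplified])

lemma evalE_upd_fresh: "evalE \<Sigma> e v c \<Longrightarrow> r \<notin> dom \<Sigma> \<Longrightarrow> evalE (\<Sigma>(r \<mapsto> w)) e v c"
  by (erule evalE_map_le(1)) (rule map_le_upd_fresh)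

lemma tyE_map_le:
  "tyE \<Gamma> e t \<Longrightarrow> \<Gamma> \<subseteq>\<^sub>m \<Gamma>' \<Longrightarrow> tyE \<Gamma>' e t"
  "tyEs \<Gamma> es ts \<Longrightarrow> \<Gamma> \<subseteq>\<^sub>m \<Gamma>' \<Longrightarrow> tyEs \<Gamma>' es ts"
proof (induction rule: tyE_tyEs.inducts)
  case (TVar \<Gamma> x t)
  then show ?case by (metis domI tyE_tyEs.TVar map_le_def)
qed (auto intro: tyE_tyEs.intros)

section \<open>Instrumentation with a doubling counter\<close>

definition double :: "vname \<Rightarrow> stmt" where
  "double r = Assign r (Op OPlus [Var r, Var r])"

(* Statements of a sequence are instrumented in place rather than wrapped in blocks: a block
   discards its declarations in the type system, so wrapping would break later uses. *)
primrec instrument :: "vname \<Rightarrow> stmt \<Rightarrow> stmt" where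
  "instrument r (Decl t x) = Decl t x"
| "instrument r (Assign x e) = Assign x e"
| "instrument r (Block ss) = Block (concat (map (\<lambda>s. [instrument r s, double r]) ss))"
| "instrument r (If e s1 s2) =
     If e (Block [instrument r s1, double r]) (Block [instrument r s2, double r])"
| "instrument r (For x e s) = For x e (Block [instrument r s, double r])"

definition instrument_seq :: "vname \<Rightarrow> stmt list \<Rightarrow> stmt list" where
  "instrument_seq r ss = concat (map (\<lambda>s. [instrument r s, double r]) ss)"

lemma instrument_seq_simps [simp]:
  "instrument_seq r [] = []"
  "instrument_seq r (s # ss) = instrument r s # double r # instrument_seq r ss"
  by (simp_all add: instrument_seq_def)

lemma instrument_Block [simp]: "instrument r (Block ss) = Block (instrument_seq r ss)"
  by (simp add: instrument_seq_def)

declare instrument.simps(3) [simp del]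

lemma exec_double: "exec (\<Sigma>(r \<mapsto> VI b)) (double r) (\<Sigma>(r \<mapsto> VI (2 * b))) 4"
proof -
  let ?\<Sigma>b = "\<Sigma>(r \<mapsto> VI b)"
  have "evalEs ?\<Sigma>b [Var r, Var r] [VI b, VI b] (1 + (1 + 0))"
    by (intro ECons EVar ENil) simp_all
  then have "evalE ?\<Sigma>b (Op OPlus [Var r, Var r]) (VI (2 * b)) (1 + (1 + 0) + 1)"
    by (rule EOp) (simp add: bin_def)
  then have "exec ?\<Sigma>b (double r) (?\<Sigma>b(r \<mapsto> VI (2 * b))) (1 + (1 + 0) + 1 + 1)"
    unfolding double_def by (intro XAssign) auto
  then show ?thesis by (simp add: numeral_eq_Suc)
qed

lemma exec_Block_double:
  assumes "exec \<Sigma> s (\<Sigma>'(r \<mapsto> VI (2 ^ n * a))) c"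
  shows "exec \<Sigma> (Block [s, double r]) (\<Sigma>'(r \<mapsto> VI (2 ^ Suc n * a))) (c + 5)"
proof -
  have "execSeq \<Sigma> [s, double r] (\<Sigma>'(r \<mapsto> VI (2 * (2 ^ n * a)))) (c + (4 + 0))"
    by (rule XSCons[OF assms XSCons[OF exec_double XSNil]])
  then have "exec \<Sigma> (Block [s, double r]) (\<Sigma>'(r \<mapsto> VI (2 * (2 ^ n * a)))) (c + (4 + 0) + 1)"
    by (rule XBlock)
  then show ?thesis by (simp add: mult.assoc add.commute)
qed

lemma exec_instrument:
  "exec \<Sigma> s \<Sigma>' c \<Longrightarrow> r \<notin> dom \<Sigma> \<Longrightarrow> r \<notin> declared_vars s \<Longrightarrow> stmt_size s \<le> K \<Longrightarrow>
     \<exists>n c'. exec (\<Sigma>(r \<mapsto> VI a)) (instrument r s) (\<Sigma>'(r \<mapsto> VI (2 ^ n * a))) c' \<and> c \<le> K * (n + 1)"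
  "execSeq \<Sigma> ss \<Sigma>' c \<Longrightarrow> r \<notin> dom \<Sigma> \<Longrightarrow> r \<notin> \<Union> (declared_vars ` set ss) \<Longrightarrow>
   \<forall>s \<in> set ss. stmt_size s \<le> K \<Longrightarrow>
     \<exists>n c'. execSeq (\<Sigma>(r \<mapsto> VI a)) (instrument_seq r ss) (\<Sigma>'(r \<mapsto> VI (2 ^ n * a))) c' \<and> c \<le> K * n"
  "execLoop x s j i \<Sigma> \<Sigma>' c \<Longrightarrow> r \<notin> dom \<Sigma> \<Longrightarrow> r \<noteq> x \<Longrightarrow> r \<notin> declared_vars s \<Longrightarrow>
   stmt_size s \<le> K \<Longrightarrow>
     \<exists>n c'. execLoop x (Block [instrument r s, double r]) j i
              (\<Sigma>(r \<mapsto> VI a)) (\<Sigma>'(r \<mapsto> VI (2 ^ n * a))) c'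
            \<and> c \<le> K * n"
proof (induction arbitrary: a and a and a rule: exec_execSeq_execLoop.inducts)
  case (XDecl \<Sigma> t x a)
  then have "exec (\<Sigma>(r \<mapsto> VI a)) (instrument r (Decl t x))
      ((\<Sigma>(x \<mapsto> default_val t))(r \<mapsto> VI (2 ^ 0 * a))) 1"
    using exec_execSeq_execLoop.XDecl[of "\<Sigma>(r \<mapsto> VI a)" t x] by (simp add: fun_upd_twist)
  moreover have "1 \<le> K * (0 + 1)" using XDecl.prems(3) by simp
  ultimately show ?case by blast
next
  case (XAssign x \<Sigma> e v c a)
  then have "x \<noteq> r" by auto
  have "exec (\<Sigma>(r \<mapsto> VI a)) (Assign x e) ((\<Sigma>(r \<mapsto> VI a))(x \<mapsto> v)) (c + 1)"
    using XAssign.hyps(1) evalE_upd_fresh[OF XAssign.hyps(2) XAssign.prems(1)]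
    by (intro exec_execSeq_execLoop.XAssign) auto
  then have "exec (\<Sigma>(r \<mapsto> VI a)) (instrument r (Assign x e))
      ((\<Sigma>(x \<mapsto> v))(r \<mapsto> VI (2 ^ 0 * a))) (c + 1)"
    using \<open>x \<noteq> r\<close> by (simp add: fun_upd_twist)
  moreover have "c + 1 \<le> K * (0 + 1)"
    using XAssign.prems(3) evalE_cost_eq_size(1)[OF XAssign.hyps(2)] by simp
  ultimately show ?case by blast
next
  case (XBlock \<Sigma> ss \<Sigma>' c a)
  have fresh: "r \<notin> \<Union> (declared_vars ` set ss)" using XBlock.prems(2) by simp
  have sizes: "\<forall>s \<in> set ss. stmt_size s \<le> K"
    using XBlock.prems(3) by (auto dest: stmt_size_le_sum_list)
  obtain n c' where ex: "execSeq (\<Sigma>(r \<mapsto> VI a)) (instrument_seq r ss) (\<Sigma>'(r \<mapsto> VI (2 ^ n * a))) c'"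
    and cost: "c \<le> K * n"
    using XBlock.IH[OF XBlock.prems(1) fresh sizes] by blast
  have "exec (\<Sigma>(r \<mapsto> VI a)) (instrument r (Block ss)) (\<Sigma>'(r \<mapsto> VI (2 ^ n * a))) (c' + 1)"
    using exec_execSeq_execLoop.XBlock[OF ex] by simp
  moreover have "c + 1 \<le> K * (n + 1)" using cost XBlock.prems(3) by simp
  ultimately show ?case by blast
next
  case (XIfT \<Sigma> e c s1 \<Sigma>' c' s2 a)
  have "r \<notin> declared_vars s1" "stmt_size s1 \<le> K" using XIfT.prems(2,3) by auto
  then obtain n c'' where
    "exec (\<Sigma>(r \<mapsto> VI a)) (instrument r s1) (\<Sigma>'(r \<mapsto> VI (2 ^ n * a))) c''" "c' \<le> K * (n + 1)"
    using XIfT.IH[OF XIfT.prems(1)] by blast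
  then have "exec (\<Sigma>(r \<mapsto> VI a)) (instrument r (If e s1 s2)) (\<Sigma>'(r \<mapsto> VI (2 ^ Suc n * a)))
      (c + (c'' + 5))"
    using exec_execSeq_execLoop.XIfT[OF evalE_upd_fresh[OF XIfT.hyps(1) XIfT.prems(1)] exec_Block_double]
    by simp
  moreover have "c + c' \<le> K * (Suc n + 1)"
    using XIfT.prems(3) evalE_cost_eq_size(1)[OF XIfT.hyps(1)] \<open>c' \<le> K * (n + 1)\<close> by simp
  ultimately show ?case by blast
next
  case (XIfF \<Sigma> e c s2 \<Sigma>' c' s1 a)
  have "r \<notin> declared_vars s2" "stmt_size s2 \<le> K" using XIfF.prems(2,3) by auto
  then obtain n c'' where
    "exec (\<Sigma>(r \<mapsto> VI a)) (instrument r s2) (\<Sigma>'(r \<mapsto> VI (2 ^ n * a))) c''" "c' \<le> K * (n + 1)"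
    using XIfF.IH[OF XIfF.prems(1)] by blast
  then have "exec (\<Sigma>(r \<mapsto> VI a)) (instrument r (If e s1 s2)) (\<Sigma>'(r \<mapsto> VI (2 ^ Suc n * a)))
      (c + (c'' + 5))"
    using exec_execSeq_execLoop.XIfF[OF evalE_upd_fresh[OF XIfF.hyps(1) XIfF.prems(1)] exec_Block_double]
    by simp
  moreover have "c + c' \<le> K * (Suc n + 1)"
    using XIfF.prems(3) evalE_cost_eq_size(1)[OF XIfF.hyps(1)] \<open>c' \<le> K * (n + 1)\<close> by simp
  ultimately show ?case by blast
next
  case (XFor \<Sigma> e i c x s \<Sigma>' c' a)
  have "r \<noteq> x" "r \<notin> declared_vars s" "stmt_size s \<le> K" using XFor.prems(2,3) by auto
  then obtain n c'' where
    "execLoop x (Block [instrument r s, double r]) 0 i (\<Sigma>(r \<mapsto> VI a)) (\<Sigma>'(r \<mapsto> VI (2 ^ n * a))) c''"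
    "c' \<le> K * n"
    using XFor.IH[OF XFor.prems(1)] by blast
  then have "exec (\<Sigma>(r \<mapsto> VI a)) (instrument r (For x e s)) (\<Sigma>'(r \<mapsto> VI (2 ^ n * a))) (c + c'')"
    using exec_execSeq_execLoop.XFor[OF evalE_upd_fresh[OF XFor.hyps(1) XFor.prems(1)]] by simp
  moreover have "c + c' \<le> K * (n + 1)"
    using XFor.prems(3) evalE_cost_eq_size(1)[OF XFor.hyps(1)] \<open>c' \<le> K * n\<close> by simp
  ultimately show ?case by blast
next
  case (XSNil \<Sigma> a)
  have "execSeq (\<Sigma>(r \<mapsto> VI a)) (instrument_seq r []) (\<Sigma>(r \<mapsto> VI (2 ^ 0 * a))) 0"
    by (simp add: exec_execSeq_execLoop.XSNil)
  then show ?case by blast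
next
  case (XSCons \<Sigma> s \<Sigma>1 c ss \<Sigma>' cs a)
  have "r \<notin> declared_vars s" "stmt_size s \<le> K" using XSCons.prems(2,3) by auto
  then obtain n1 c1 where ex1: "exec (\<Sigma>(r \<mapsto> VI a)) (instrument r s) (\<Sigma>1(r \<mapsto> VI (2 ^ n1 * a))) c1"
    and cost1: "c \<le> K * (n1 + 1)"
    using XSCons.IH(1)[OF XSCons.prems(1)] by blast
  have "r \<notin> dom \<Sigma>1" using exec_dom_subset(1)[OF XSCons.hyps(1)] XSCons.prems(1,2) by auto
  moreover have "r \<notin> \<Union> (declared_vars ` set ss)" "\<forall>s \<in> set ss. stmt_size s \<le> K"
    using XSCons.prems(2,3) by auto
  ultimately obtain n2 c2 where ex2: "execSeq (\<Sigma>1(r \<mapsto> VI (2 * (2 ^ n1 * a)))) (instrument_seq r ss)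
      (\<Sigma>'(r \<mapsto> VI (2 ^ n2 * (2 * (2 ^ n1 * a))))) c2"
    and cost2: "cs \<le> K * n2"
    using XSCons.IH(2) by blast
  have "execSeq (\<Sigma>(r \<mapsto> VI a)) (instrument_seq r (s # ss))
      (\<Sigma>'(r \<mapsto> VI (2 ^ (n1 + 1 + n2) * a))) (c1 + (4 + c2))"
    using exec_execSeq_execLoop.XSCons[OF ex1 exec_execSeq_execLoop.XSCons[OF exec_double ex2]]
    by (simp add: power_add algebra_simps)
  moreover have "c + cs \<le> K * (n1 + 1 + n2)" using cost1 cost2 by (simp add: algebra_simps)
  ultimately show ?case by blast
next
  case (XLStop j i x s \<Sigma> a)
  have "execLoop x (Block [instrument r s, double r]) j i (\<Sigma>(r \<mapsto> VI a)) (\<Sigma>(r \<mapsto> VI (2 ^ 0 * a))) 0"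
    using exec_execSeq_execLoop.XLStop[OF XLStop.hyps] by simp
  then show ?case by blast
next
  case (XLStep j i \<Sigma> x s \<Sigma>1 c1 \<Sigma>' c2 a)
  have swap: "(\<Sigma>(x \<mapsto> VI (int j)))(r \<mapsto> VI a) = (\<Sigma>(r \<mapsto> VI a))(x \<mapsto> VI (int j))"
    using XLStep.prems(2) by (simp add: fun_upd_twist)
  have "r \<notin> dom (\<Sigma>(x \<mapsto> VI (int j)))" using XLStep.prems(1,2) by simp
  then obtain n1 c1' where ex1: "exec ((\<Sigma>(x \<mapsto> VI (int j)))(r \<mapsto> VI a)) (instrument r s)
      (\<Sigma>1(r \<mapsto> VI (2 ^ n1 * a))) c1'"
    and cost1: "c1 \<le> K * (n1 + 1)"
    using XLStep.IH(1) XLStep.prems(3,4) by blast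
  have "r \<notin> dom \<Sigma>1" using exec_dom_subset(1)[OF XLStep.hyps(2)] XLStep.prems by auto
  then obtain n2 c2' where ex2: "execLoop x (Block [instrument r s, double r]) (Suc j) i
      (\<Sigma>1(r \<mapsto> VI (2 ^ Suc n1 * a))) (\<Sigma>'(r \<mapsto> VI (2 ^ n2 * (2 ^ Suc n1 * a)))) c2'"
    and cost2: "c2 \<le> K * n2"
    using XLStep.IH(2) XLStep.prems(2-4) by blast
  have "execLoop x (Block [instrument r s, double r]) j i (\<Sigma>(r \<mapsto> VI a))
      (\<Sigma>'(r \<mapsto> VI (2 ^ (n1 + 1 + n2) * a))) (c1' + 5 + c2')"
    using exec_execSeq_execLoop.XLStep[OF XLStep.hyps(1)
        exec_Block_double[OF ex1[unfolded swap]] ex2]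
    by (simp add: power_add algebra_simps)
  moreover have "c1 + c2 \<le> K * (n1 + 1 + n2)" using cost1 cost2 by (simp add: algebra_simps)
  ultimately show ?case by blast
qed

lemma tyS_double: "tyS (\<Gamma>(r \<mapsto> TInt)) lp (double r) (\<Gamma>(r \<mapsto> TInt))"
proof -
  have "tyEs (\<Gamma>(r \<mapsto> TInt)) [Var r, Var r] [TInt, TInt]"
    by (intro TCons TVar TNil) simp_all
  then have "tyE (\<Gamma>(r \<mapsto> TInt)) (Op OPlus [Var r, Var r]) TInt"
    by (rule TOp) (simp add: bin_def int_ty_def is_int_ty_def sup_ty_def)
  then show ?thesis
    unfolding double_def by (rule TAssign[rotated 2]) (auto simp: compat_ty_def is_int_ty_def)
qed

lemma tyS_Block_double:
  "tyS \<Gamma> lp s (\<Gamma>'(r \<mapsto> TInt)) \<Longrightarrow> tyS \<Gamma> lp (Block [s, double r]) \<Gamma>"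
  by (rule TBlock, rule TSCons, assumption, rule TSCons[OF tyS_double TSNil])

lemma tyS_instrument:
  "tyS \<Gamma> lp s \<Gamma>' \<Longrightarrow> r \<notin> dom \<Gamma> \<Longrightarrow> r \<notin> declared_vars s \<Longrightarrow>
     tyS (\<Gamma>(r \<mapsto> TInt)) lp (instrument r s) (\<Gamma>'(r \<mapsto> TInt))"
  "tySeq \<Gamma> lp ss \<Gamma>' \<Longrightarrow> r \<notin> dom \<Gamma> \<Longrightarrow> r \<notin> \<Union> (declared_vars ` set ss) \<Longrightarrow>
     tySeq (\<Gamma>(r \<mapsto> TInt)) lp (instrument_seq r ss) (\<Gamma>'(r \<mapsto> TInt))"
proof (induction rule: tyS_tySeq.inducts)
  case (TDecl x \<Gamma> lp t)
  then have "tyS (\<Gamma>(r \<mapsto> TInt)) lp (Decl t x) ((\<Gamma>(r \<mapsto> TInt))(x \<mapsto> t))"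
    by (intro tyS_tySeq.TDecl) auto
  moreover have "(\<Gamma>(r \<mapsto> TInt))(x \<mapsto> t) = (\<Gamma>(x \<mapsto> t))(r \<mapsto> TInt)"
    using TDecl.prems by (auto intro: fun_upd_twist)
  ultimately show ?case by (metis instrument.simps(1))
next
  case (TAssign \<Gamma> x tx lp e t)
  have "x \<noteq> r" using TAssign.hyps(1) TAssign.prems(1) by auto
  have "tyE (\<Gamma>(r \<mapsto> TInt)) e t"
    using TAssign.hyps(3) map_le_upd_fresh[OF TAssign.prems(1)] by (rule tyE_map_le(1))
  with TAssign.hyps \<open>x \<noteq> r\<close> have "tyS (\<Gamma>(r \<mapsto> TInt)) lp (Assign x e) (\<Gamma>(r \<mapsto> TInt))"
    by (intro tyS_tySeq.TAssign[where tx = tx]) simp_all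
  then show ?case by (simp only: instrument.simps)
next
  case (TBlock \<Gamma> lp ss \<Gamma>')
  have "r \<notin> \<Union> (declared_vars ` set ss)" using TBlock.prems(2) by simp
  from tyS_tySeq.TBlock[OF TBlock.IH[OF TBlock.prems(1) this]]
  show ?case by (simp only: instrument_Block)
next
  case (TIf \<Gamma> e lp s1 \<Gamma>1 s2 \<Gamma>2)
  have "r \<notin> declared_vars s1" "r \<notin> declared_vars s2" using TIf.prems(2) by simp_all
  then have "tyS (\<Gamma>(r \<mapsto> TInt)) lp (Block [instrument r s1, double r]) (\<Gamma>(r \<mapsto> TInt))"
    "tyS (\<Gamma>(r \<mapsto> TInt)) lp (Block [instrument r s2, double r]) (\<Gamma>(r \<mapsto> TInt))"
    using TIf.IH TIf.prems(1) by (blast intro: tyS_Block_double)+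
  moreover have "tyE (\<Gamma>(r \<mapsto> TInt)) e TBool"
    using TIf.hyps(1) map_le_upd_fresh[OF TIf.prems(1)] by (rule tyE_map_le(1))
  ultimately show ?case unfolding instrument.simps by (intro tyS_tySeq.TIf)
next
  case (TFor \<Gamma> e x s \<Gamma>' lp)
  have "x \<noteq> r" "r \<notin> declared_vars s" using TFor.prems(2) by auto
  then have "r \<notin> dom (\<Gamma>(x \<mapsto> TIInt))" using TFor.prems(1) by simp
  with TFor.IH \<open>r \<notin> declared_vars s\<close>
  have "tyS ((\<Gamma>(x \<mapsto> TIInt))(r \<mapsto> TInt)) True (instrument r s) (\<Gamma>'(r \<mapsto> TInt))" by blast
  then have "tyS ((\<Gamma>(r \<mapsto> TInt))(x \<mapsto> TIInt)) True (Block [instrument r s, double r])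
      ((\<Gamma>(r \<mapsto> TInt))(x \<mapsto> TIInt))"
    using \<open>x \<noteq> r\<close> by (intro tyS_Block_double) (simp add: fun_upd_twist)
  moreover have "tyE (\<Gamma>(r \<mapsto> TInt)) (Op OSize [e]) TIInt"
    using TFor.hyps(1) map_le_upd_fresh[OF TFor.prems(1)] by (rule tyE_map_le(1))
  moreover have "x \<notin> dom (\<Gamma>(r \<mapsto> TInt))" using TFor.hyps(2) \<open>x \<noteq> r\<close> by simp
  ultimately show ?case unfolding instrument.simps by (intro tyS_tySeq.TFor)
next
  case (TSNil \<Gamma> lp)
  show ?case unfolding instrument_seq_simps by (rule tyS_tySeq.TSNil)
next
  case (TSCons \<Gamma> lp s \<Gamma>1 ss \<Gamma>')
  have "r \<notin> declared_vars s" "r \<notin> \<Union> (declared_vars ` set ss)" using TSCons.prems(2) by simp_all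
  moreover have "r \<notin> dom \<Gamma>1" using tyS_dom_subset(1)[OF TSCons.hyps(1)] TSCons.prems by auto
  ultimately have "tyS (\<Gamma>(r \<mapsto> TInt)) lp (instrument r s) (\<Gamma>1(r \<mapsto> TInt))"
    "tySeq (\<Gamma>1(r \<mapsto> TInt)) lp (instrument_seq r ss) (\<Gamma>'(r \<mapsto> TInt))"
    using TSCons.IH TSCons.prems(1) by blast+
  then show ?case
    unfolding instrument_seq_simps by (intro tyS_tySeq.TSCons[OF _ tyS_tySeq.TSCons[OF tyS_double]])
qed

definition instrument_prog :: "vname \<Rightarrow> prog \<Rightarrow> prog" where
  "instrument_prog r p =
     \<lparr>params = params p,
      body = Decl TInt r # Assign r (Num 1) # instrument_seq r (body p),
      ret = Var r\<rparr>"

lemma params_instrument_prog [simp]: "params (instrument_prog r p) = params p"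
  by (simp add: instrument_prog_def)

lemma well_typed_instrument_prog:
  assumes "well_typed p" "r \<notin> set (params p)" "r \<notin> \<Union> (declared_vars ` set (body p))"
  shows "well_typed (instrument_prog r p)"
proof -
  let ?\<Gamma> = "Map.empty(params p [\<mapsto>] replicate (length (params p)) TInt)"
  obtain \<Gamma>' t where body: "tySeq ?\<Gamma> False (body p) \<Gamma>'" and "tyE \<Gamma>' (ret p) t" "is_int_ty t"
    using assms(1) unfolding well_typed_def by blast
  have fresh: "r \<notin> dom ?\<Gamma>" using assms(2) by simp
  have "tyS ?\<Gamma> False (Decl TInt r) (?\<Gamma>(r \<mapsto> TInt))" using fresh by (intro TDecl) auto
  moreover have "tyS (?\<Gamma>(r \<mapsto> TInt)) False (Assign r (Num 1)) (?\<Gamma>(r \<mapsto> TInt))"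
    by (rule TAssign[where t = TIInt]) (auto intro: TNum simp: compat_ty_def is_int_ty_def)
  moreover have "tySeq (?\<Gamma>(r \<mapsto> TInt)) False (instrument_seq r (body p)) (\<Gamma>'(r \<mapsto> TInt))"
    using tyS_instrument(2)[OF body fresh assms(3)] .
  ultimately have "tySeq ?\<Gamma> False (body (instrument_prog r p)) (\<Gamma>'(r \<mapsto> TInt))"
    unfolding instrument_prog_def by (auto intro: TSCons)
  moreover have "tyE (\<Gamma>'(r \<mapsto> TInt)) (ret (instrument_prog r p)) TInt"
    unfolding instrument_prog_def by (auto intro: TVar)
  ultimately show ?thesis unfolding well_typed_def instrument_prog_def by (auto simp: is_int_ty_def)
qed

lemma run_instrument_prog:
  assumes "run p vs y c" "length vs = length (params p)"
    and "r \<notin> set (params p)" "r \<notin> \<Union> (declared_vars ` set (body p))"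
  shows "\<exists>n c'. run (instrument_prog r p) vs (2 ^ n) c'
                \<and> c \<le> sum_list (map stmt_size (body p)) * n + expr_size (ret p)"
proof -
  let ?\<Sigma> = "Map.empty(params p [\<mapsto>] map VI vs)"
  let ?K = "sum_list (map stmt_size (body p))"
  obtain \<Sigma>' c1 c2 where body: "execSeq ?\<Sigma> (body p) \<Sigma>' c1"
    and ret: "evalE \<Sigma>' (ret p) (VI y) c2" and "c = c1 + c2"
    using assms(1) unfolding run_def by blast
  have "r \<notin> dom ?\<Sigma>" using assms(2,3) by simp
  then obtain n c' where
    counted: "execSeq (?\<Sigma>(r \<mapsto> VI 1)) (instrument_seq r (body p)) (\<Sigma>'(r \<mapsto> VI (2 ^ n * 1))) c'"
    and "c1 \<le> ?K * n"
    using exec_instrument(2)[OF body _ assms(4)] stmt_size_le_sum_list by blast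
  have decl: "exec ?\<Sigma> (Decl TInt r) (?\<Sigma>(r \<mapsto> VI 0)) 1"
    using XDecl[of ?\<Sigma> TInt r] by simp
  have assign: "exec (?\<Sigma>(r \<mapsto> VI 0)) (Assign r (Num 1)) (?\<Sigma>(r \<mapsto> VI 1)) (1 + 1)"
    using XAssign[of r "?\<Sigma>(r \<mapsto> VI 0)", OF _ ENum[of _ 1]] by simp
  have "execSeq ?\<Sigma> (body (instrument_prog r p)) (\<Sigma>'(r \<mapsto> VI (2 ^ n))) (1 + ((1 + 1) + c'))"
    using XSCons[OF decl XSCons[OF assign counted]] by (simp add: instrument_prog_def)
  moreover have "evalE (\<Sigma>'(r \<mapsto> VI (2 ^ n))) (ret (instrument_prog r p)) (VI (2 ^ n)) 1"
    unfolding instrument_prog_def prog.select_convs by (rule EVar) simp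
  ultimately have "run (instrument_prog r p) vs (2 ^ n) (1 + ((1 + 1) + c') + 1)"
    unfolding run_def params_instrument_prog by blast
  moreover have "c \<le> ?K * n + expr_size (ret p)"
    using \<open>c = c1 + c2\<close> \<open>c1 \<le> ?K * n\<close> evalE_cost_eq_size(1)[OF ret] by simp
  ultimately show ?thesis by blast
qed

section \<open>The counter as a clock\<close>

lemma sz_int_power_of_two: "n \<le> sz_int (2 ^ n)"
proof -
  have "real n = log 2 (2 ^ n)" by (simp add: log_nat_power)
  also have "\<dots> \<le> log 2 (2 ^ n + 1)" by (rule log_mono) auto
  also have "\<dots> = log 2 (real_of_int (\<bar>(2::int) ^ n\<bar> + 1))" by simp
  also have "\<dots> \<le> real_of_int \<lceil>log 2 (real_of_int (\<bar>(2::int) ^ n\<bar> + 1))\<rceil>" by (rule le_of_int_ceiling)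
  finally show ?thesis unfolding sz_int_def by linarith
qed

lemma ex_fresh_var:
  obtains r where "r \<notin> set (params p)" "r \<notin> \<Union> (declared_vars ` set (body p))"
proof -
  have "finite (set (params p) \<union> \<Union> (declared_vars ` set (body p)))"
    by (simp add: finite_declared_vars)
  then obtain r where "r \<notin> set (params p) \<union> \<Union> (declared_vars ` set (body p))"
    using ex_new_if_finite[OF infinite_UNIV_listI] by blast
  then show ?thesis using that by blast
qed

lemma ex_clock_in_FPC:
  assumes "well_typed p" and "computes p f"
  obtains g K R where "(length (params p), g) \<in> FPC"
    and "\<And>vs c. length vs = length (params p) \<Longrightarrow> run p vs (f vs) c \<Longrightarrow> c \<le> K * sz_int (g vs) + R"
proof -
  obtain r where r: "r \<notin> set (params p)" "r \<notin> \<Union> (declared_vars ` set (body p))"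
    by (rule ex_fresh_var)
  define q where "q = instrument_prog r p"
  define g where "g vs = (THE y. \<exists>c. run q vs y c)" for vs
  define K where "K = sum_list (map stmt_size (body p))"
  have clock: "\<exists>n. g vs = 2 ^ n \<and> (\<exists>c'. run q vs (g vs) c') \<and> c \<le> K * n + expr_size (ret p)"
    if len: "length vs = length (params p)" and run: "run p vs y c" for vs y c
  proof -
    obtain n c' where "run q vs (2 ^ n) c'" "c \<le> K * n + expr_size (ret p)"
      using run_instrument_prog[OF run len r] unfolding q_def K_def by blast
    moreover from this(1) have "g vs = 2 ^ n"
      unfolding g_def by (blast intro: the_equality dest: run_deterministic)
    ultimately show ?thesis by auto
  qed
  have "computes q g"
    using assms(2) clock unfolding computes_def q_def params_instrument_prog by blast
  moreover have "well_typed q" unfolding q_def using assms(1) r by (rule well_typed_instrument_prog)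
  ultimately have "(length (params p), g) \<in> FPC"
    unfolding FPC_def q_def by fastforce
  moreover have "c \<le> K * sz_int (g vs) + expr_size (ret p)"
    if len: "length vs = length (params p)" and run: "run p vs (f vs) c" for vs c
  proof -
    obtain n where "g vs = 2 ^ n" "c \<le> K * n + expr_size (ret p)" using clock[OF len run] by blast
    with sz_int_power_of_two[of n] show ?thesis by (metis add_le_mono1 mult_le_mono2 order_trans)
  qed
  ultimately show ?thesis using that by blast
qed

theorem corollary1:
  fixes T :: "nat \<Rightarrow> nat"
  assumes "\<forall>n. T n \<ge> n"
    and "\<forall>(m, f) \<in> FPC. \<exists>C N. \<forall>vs. length vs = m \<longrightarrow> sz_ints vs \<ge> N
                              \<longrightarrow> sz_int (f vs) \<le> C * T (sz_ints vs)"
  shows "FPC = FPC_T T"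
proof
  show "FPC_T T \<subseteq> FPC" unfolding FPC_T_def FPC_def by blast
next
  show "FPC \<subseteq> FPC_T T"
  proof (clarify)
    fix m f assume "(m, f) \<in> FPC"
    then obtain p where p: "well_typed p" "length (params p) = m" "computes p f"
      unfolding FPC_def by blast
    obtain g K R where "(m, g) \<in> FPC"
      and cost: "\<And>vs c. length vs = m \<Longrightarrow> run p vs (f vs) c \<Longrightarrow> c \<le> K * sz_int (g vs) + R"
      using ex_clock_in_FPC[OF p(1,3)] p(2) by metis
    then obtain C N where size:
      "\<And>vs. length vs = m \<Longrightarrow> sz_ints vs \<ge> N \<Longrightarrow> sz_int (g vs) \<le> C * T (sz_ints vs)"
      using assms(2) by blast
    have "c \<le> (K * C + R) * T (sz_ints vs)"
      if "length vs = m" "sz_ints vs \<ge> max N 1" "run p vs (f vs) c" for vs c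
    proof -
      have "1 \<le> T (sz_ints vs)" using assms(1) that(2) by (metis le_trans max.boundedE)
      have "c \<le> K * sz_int (g vs) + R" using cost that(1,3) .
      also have "\<dots> \<le> K * (C * T (sz_ints vs)) + R * T (sz_ints vs)"
        using size[OF that(1)] that(2) \<open>1 \<le> T (sz_ints vs)\<close> by (intro add_mono) simp_all
      also have "\<dots> = (K * C + R) * T (sz_ints vs)" by (simp add: algebra_simps)
      finally show ?thesis .
    qed
    with p show "(m, f) \<in> FPC_T T" unfolding FPC_T_def by blast
  qed
qed

end
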